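(* Fix $M>0$ and $0\le\theta<2s-1$. If $\limsup_{n\to\infty}\Delta_n n^{\frac{4s}{4s+\theta+1}}<\infty$, then $$\liminf_{n\to\infty}\inf_{T\in\mathcal T_n}\big[\mathbb E_{P_0}T+\beta(T;\Delta_n,\theta,M)\big]>0,$$ where $\mathcal T_n$ is the collection of all measurable test functions $T:\mathcal X^n\to[0,1]$ of $X_1,\dots,X_n$.
   Context: Standing setup. $(\mathcal X,\mathcal B)$ is a measurable space and $P_0$ a known probability measure on it. $K$ is a symmetric, positive semidefinite, square-integrable kernel, degenerate under $P_0$, with Mercer decomposition $K(x,x')=\sum_{k\ge1}\lambda_k\varphi_k(x)\varphi_k(x')$, infinitely many eigenvalues $\lambda_1>\lambda_2>\cdots>0$, $\{\varphi_k\}$ an orthonormal basis of the $P_0$-mean-zero functions in $L_2(P_0)$, $0<\liminf_k k^{2s}\lambda_k\le\limsup_k k^{2s}\lambda_k<\infty$ for some $s>1/2$, and $\sup_k\|\varphi_k\|_\infty<\infty$. $\mathcal H(K)$ is the RKHS of $K$, $\|f\|_K^2=\sum_k\lambda_k^{-1}\langle f,\varphi_k\rangle_{L_2(P_0)}^2$. $\mathcal F(\theta;M)$ ($\theta>0$) is the set of $f\in L_2(P_0)$ such that for every $R>0$ there is $f_R\in\mathcal H(K)$ with $\|f_R\|_K\le R$ and $\|f-f_R\|_{L_2(P_0)}\le MR^{-1/\theta}$; $\mathcal F(0;M)=\{f\in\mathcal H(K):\|f\|_K\le M\}$. $\mathcal P(\Delta,\theta,M)$ is the set of probability measures $P\ll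 P_0$ with $u=dP/dP_0-1\in\mathcal F(\theta;M)$ and $\|u\|^2_{L_2(P_0)}\ge\Delta$. Type II error: $\beta(T;\Delta,\theta,M)=\sup_{P\in\mathcal P(\Delta,\theta,M)}\mathbb E_P[1-T(X_1,\dots,X_n)]$ with $X_i$ i.i.d. $P$; $\mathbb E_{P_0}T$ is the type I error. *)

theory Defs
  imports "HOL-Probability.Probability"
begin

definition L2 :: "'a measure \<Rightarrow> ('a \<Rightarrow> real) \<Rightarrow> bool" where
  "L2 P0 f \<longleftrightarrow> f \<in> borel_measurable P0 \<and> integrable P0 (\<lambda>x. (f x)^2)"

definition inner_L2 :: "'a measure \<Rightarrow> ('a \<Rightarrow> real) \<Rightarrow> ('a \<Rightarrow> real) \<Rightarrow> real" where
  "inner_L2 P0 f g = (\<integral>x. f x * g x \<partial>P0)"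

definition norm_L2 :: "'a measure \<Rightarrow> ('a \<Rightarrow> real) \<Rightarrow> real" where
  "norm_L2 P0 f = sqrt (\<integral>x. (f x)^2 \<partial>P0)"

text \<open>RKHS H(K) of the Mercer kernel sum_k lam k * phi k x * phi k x' (index k = 0 is the
  paper's k = 1): mean-zero L2 functions with finite norm sum_k lam_k^-1 <f,phi_k>^2.\<close>
definition in_RKHS :: "'a measure \<Rightarrow> (nat \<Rightarrow> real) \<Rightarrow> (nat \<Rightarrow> 'a \<Rightarrow> real) \<Rightarrow> ('a \<Rightarrow> real) \<Rightarrow> bool" where
  "in_RKHS P0 lam phi f \<longleftrightarrow> L2 P0 f \<and> (\<integral>x. f x \<partial>P0) = 0 \<and>
     summable (\<lambda>k. (inner_L2 P0 f (phi k))^2 / lam k)"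

definition rkhs_norm :: "'a measure \<Rightarrow> (nat \<Rightarrow> real) \<Rightarrow> (nat \<Rightarrow> 'a \<Rightarrow> real) \<Rightarrow> ('a \<Rightarrow> real) \<Rightarrow> real" where
  "rkhs_norm P0 lam phi f = sqrt (\<Sum>k. (inner_L2 P0 f (phi k))^2 / lam k)"

definition Fclass :: "'a measure \<Rightarrow> (nat \<Rightarrow> real) \<Rightarrow> (nat \<Rightarrow> 'a \<Rightarrow> real) \<Rightarrow> real \<Rightarrow> real \<Rightarrow> ('a \<Rightarrow> real) set" where
  "Fclass P0 lam phi \<theta> M =
     (if \<theta> = 0 then {f. in_RKHS P0 lam phi f \<and> rkhs_norm P0 lam phi f \<le> M}
      else {f. L2 P0 f \<and> (\<forall>R>0. \<exists>g. in_RKHS P0 lam phi g \<and> rkhs_norm P0 lam phi g \<le> R \<and>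
                 norm_L2 P0 (\<lambda>x. f x - g x) \<le> M * R powr (- 1 / \<theta>))})"

definition dev :: "'a measure \<Rightarrow> 'a measure \<Rightarrow> 'a \<Rightarrow> real" where
  "dev P0 P = (\<lambda>x. enn2real (RN_deriv P0 P x) - 1)"

definition Pclass :: "'a measure \<Rightarrow> (nat \<Rightarrow> real) \<Rightarrow> (nat \<Rightarrow> 'a \<Rightarrow> real) \<Rightarrow> real \<Rightarrow> real \<Rightarrow> real \<Rightarrow> 'a measure set" where
  "Pclass P0 lam phi \<Delta> \<theta> M = {P. prob_space P \<and> sets P = sets P0 \<and> absolutely_continuous P0 P \<and>
      dev P0 P \<in> Fclass P0 lam phi \<theta> M \<and> (norm_L2 P0 (dev P0 P))^2 \<ge> \<Delta>}"

definition tests :: "'a measure \<Rightarrow> nat \<Rightarrow> ((nat \<Rightarrow> 'a) \<Rightarrow> real) set" where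
  "tests P0 n = {T. T \<in> borel_measurable (PiM {..<n} (\<lambda>_. P0)) \<and> (\<forall>\<omega>. 0 \<le> T \<omega> \<and> T \<omega> \<le> 1)}"

definition type2 :: "'a measure \<Rightarrow> (nat \<Rightarrow> real) \<Rightarrow> (nat \<Rightarrow> 'a \<Rightarrow> real) \<Rightarrow> nat \<Rightarrow> ((nat \<Rightarrow> 'a) \<Rightarrow> real)
     \<Rightarrow> real \<Rightarrow> real \<Rightarrow> real \<Rightarrow> ereal" where
  "type2 P0 lam phi n T \<Delta> \<theta> M =
     (SUP P\<in>Pclass P0 lam phi \<Delta> \<theta> M. ereal (\<integral>\<omega>. 1 - T \<omega> \<partial>(PiM {..<n} (\<lambda>_. P))))"

end

theory Submission
  imports Defs
begin

text \<open>Le Cam's mixture method. With \<open>B\<close> of order \<open>(n \<Delta>\<^sub>n)\<^sup>2\<close> and \<open>a\<^sup>2 B = \<Delta>\<^sub>n\<close>,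
  consider the \<open>2\<^sup>B\<close> alternatives with densities \<open>1 + a \<Sum>\<^sub>k \<xi>\<^sub>k \<phi>\<^sub>k\<close> (sum over \<open>k < B\<close>), \<open>\<xi> \<in> {-1, 1}\<^sup>B\<close>.
  Since \<open>1 / \<lambda>\<^sub>k\<close> is at most of order \<open>B powr (2s)\<close> for \<open>k < B\<close>, the rate
  \<open>\<Delta>\<^sub>n \<approx> n powr (-4s / (4s + \<theta> + 1))\<close> is exactly what keeps these alternatives in
  \<open>Pclass (\<Delta>\<^sub>n, \<theta>, M)\<close>, and \<open>\<theta> < 2s - 1\<close> forces \<open>a B \<rightarrow> 0\<close>, so the densities stay nonnegative.
  The second moment of the likelihood ratio of the uniform mixture of their \<open>n\<close>-fold products
  against \<open>P\<^sub>0\<^sup>n\<close> is at most \<open>exp (B (n a\<^sup>2)\<^sup>2)\<close>, which stays bounded; a likelihood ratio with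
  bounded second moment keeps the sum of the two error probabilities of any test away from zero.\<close>

lemma exp_plus_exp_minus_le:
  fixes t :: real
  assumes "0 \<le> t" "t \<le> 1"
  shows "exp t + exp (-t) \<le> 2 * exp (t^2)"
proof -
  have "exp t \<le> 1 + t + t^2" using exp_bound assms by auto
  moreover have "exp (-t) \<le> 1 - t + t^2"
  proof -
    have "exp (-t) \<le> 1 / (1 + t)"
      using exp_ge_add_one_self[of t] assms by (simp add: exp_minus field_simps)
    also have "\<dots> \<le> 1 - t + t^2" using assms by (simp add: field_simps power2_eq_square)
    finally show ?thesis .
  qed
  moreover have "1 + t^2 \<le> exp (t^2)" by (rule exp_ge_add_one_self)
  ultimately show ?thesis by linarith
qed

lemma sum_sign_vectors_exp_le:
  fixes S :: "'i set" and t :: real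
  assumes S: "finite S" and t: "0 \<le> t" "t \<le> 1"
  shows "(\<Sum>\<xi>\<in>PiE S (\<lambda>_. {-1, 1}). \<Sum>\<xi>'\<in>PiE S (\<lambda>_. {-1, 1}). exp (t * (\<Sum>k\<in>S. \<xi> k * \<xi>' k)))
           \<le> 4 ^ card S * exp (card S * t^2)"
proof -
  let ?X = "PiE S (\<lambda>_. {-1, 1::real})"
  have inner: "(\<Sum>\<xi>'\<in>?X. exp (t * (\<Sum>k\<in>S. \<xi> k * \<xi>' k))) = (exp t + exp (-t)) ^ card S"
    if "\<xi> \<in> ?X" for \<xi>
  proof -
    have "(\<Sum>\<xi>'\<in>?X. exp (t * (\<Sum>k\<in>S. \<xi> k * \<xi>' k))) = (\<Sum>\<xi>'\<in>?X. \<Prod>k\<in>S. exp (t * (\<xi> k * \<xi>' k)))"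
      by (simp add: sum_distrib_left exp_sum S)
    also have "\<dots> = (\<Prod>k\<in>S. \<Sum>y\<in>{-1, 1}. exp (t * (\<xi> k * y)))"
      by (rule prod_sum_PiE[symmetric]) (auto simp: S)
    also have "\<dots> = (\<Prod>k\<in>S. exp t + exp (-t))"
      using that by (intro prod.cong refl) (auto simp: PiE_iff)
    finally show ?thesis by simp
  qed
  have four: "(4::real) ^ card S = 2 ^ card S * 2 ^ card S" by (simp flip: power_mult_distrib)
  have "(\<Sum>\<xi>\<in>?X. \<Sum>\<xi>'\<in>?X. exp (t * (\<Sum>k\<in>S. \<xi> k * \<xi>' k))) = (\<Sum>\<xi>\<in>?X. (exp t + exp (-t)) ^ card S)"
    by (rule sum.cong) (auto simp: inner)
  also have "\<dots> = 2 ^ card S * (exp t + exp (-t)) ^ card S"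
    using S by (simp add: card_PiE numeral_2_eq_2)
  also have "\<dots> \<le> 2 ^ card S * (2 * exp (t^2)) ^ card S"
    using t by (intro mult_left_mono power_mono exp_plus_exp_minus_le) (auto intro: add_nonneg_nonneg)
  also have "\<dots> = 4 ^ card S * exp (card S * t^2)"
    by (simp add: four power_mult_distrib exp_of_nat_mult mult.assoc)
  finally show ?thesis .
qed

definition signs :: "nat \<Rightarrow> (nat \<Rightarrow> real) set" where
  "signs B = PiE {..<B} (\<lambda>_. {-1, 1})"

lemma finite_signs: "finite (signs B)"
  by (simp add: signs_def finite_PiE)

lemma card_signs: "card (signs B) = 2 ^ B"
  by (simp add: signs_def card_PiE numeral_2_eq_2)

lemma signs_nonempty: "signs B \<noteq> {}"
  using card_signs[of B] by auto

lemma signs_cases: "\<xi> \<in> signs B \<Longrightarrow> k < B \<Longrightarrow> \<xi> k = -1 \<or> \<xi> k = 1"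
  by (auto simp: signs_def PiE_iff)

lemma PiM_density_prod:
  fixes g :: "'a \<Rightarrow> real"
  assumes P0: "prob_space P0" and g[measurable]: "g \<in> borel_measurable P0"
    and Q: "prob_space (density P0 (\<lambda>x. ennreal (g x)))" and I: "finite I"
  shows "PiM I (\<lambda>_. density P0 (\<lambda>x. ennreal (g x))) =
         density (PiM I (\<lambda>_. P0)) (\<lambda>\<omega>. \<Prod>i\<in>I. ennreal (g (\<omega> i)))"
proof -
  let ?Q = "density P0 (\<lambda>x. ennreal (g x))"
  interpret Qp: product_sigma_finite "\<lambda>_. ?Q"
    using Q by (simp add: product_sigma_finite_def prob_space_imp_sigma_finite)
  interpret Pp: product_sigma_finite "\<lambda>_. P0"
    using P0 by (simp add: product_sigma_finite_def prob_space_imp_sigma_finite)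
  have sPi: "sets (PiM I (\<lambda>_. ?Q)) = sets (PiM I (\<lambda>_. P0))"
    by (rule sets_PiM_cong) auto
  show ?thesis
  proof (rule Qp.PiM_eqI[symmetric, OF I])
    show "sets (density (PiM I (\<lambda>_. P0)) (\<lambda>\<omega>. \<Prod>i\<in>I. ennreal (g (\<omega> i)))) = sets (PiM I (\<lambda>_. ?Q))"
      using sPi by simp
    fix A assume "\<And>i. i \<in> I \<Longrightarrow> A i \<in> sets ?Q"
    then have A: "\<And>i. i \<in> I \<Longrightarrow> A i \<in> sets P0" by simp
    have PA: "Pi\<^sub>E I A \<in> sets (PiM I (\<lambda>_. P0))"
      using A by (intro sets_PiM_I_finite I) auto
    have "emeasure (density (PiM I (\<lambda>_. P0)) (\<lambda>\<omega>. \<Prod>i\<in>I. ennreal (g (\<omega> i)))) (Pi\<^sub>E I A)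
        = (\<integral>\<^sup>+\<omega>. (\<Prod>i\<in>I. ennreal (g (\<omega> i))) * indicator (Pi\<^sub>E I A) \<omega> \<partial>PiM I (\<lambda>_. P0))"
      using PA by (intro emeasure_density) auto
    also have "\<dots> = (\<integral>\<^sup>+\<omega>. (\<Prod>i\<in>I. ennreal (g (\<omega> i)) * indicator (A i) (\<omega> i)) \<partial>PiM I (\<lambda>_. P0))"
    proof (rule nn_integral_cong)
      fix \<omega> assume "\<omega> \<in> space (PiM I (\<lambda>_. P0))"
      then have ext: "\<omega> \<in> extensional I" by (auto simp: space_PiM PiE_def)
      show "(\<Prod>i\<in>I. ennreal (g (\<omega> i))) * indicator (Pi\<^sub>E I A) \<omega>
          = (\<Prod>i\<in>I. ennreal (g (\<omega> i)) * indicator (A i) (\<omega> i))"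
      proof (cases "\<omega> \<in> Pi\<^sub>E I A")
        case True then show ?thesis by (auto simp: prod.distrib PiE_iff indicator_def)
      next
        case False
        then obtain j where j: "j \<in> I" "\<omega> j \<notin> A j" using ext by (auto simp: PiE_iff)
        then have "(\<Prod>i\<in>I. ennreal (g (\<omega> i)) * indicator (A i) (\<omega> i)) = 0"
          using I by (intro prod_zero bexI[of _ j]) auto
        with False show ?thesis by simp
      qed
    qed
    also have "\<dots> = (\<Prod>i\<in>I. \<integral>\<^sup>+x. ennreal (g x) * indicator (A i) x \<partial>P0)"
      using A by (subst Pp.product_nn_integral_prod[OF I]) auto
    also have "\<dots> = (\<Prod>i\<in>I. emeasure ?Q (A i))"
      using A by (intro prod.cong refl emeasure_density[symmetric]) auto
    finally show "emeasure (density (PiM I (\<lambda>_. P0)) (\<lambda>\<omega>. \<Prod>i\<in>I. ennreal (g (\<omega> i)))) (Pi\<^sub>E I A)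
        = (\<Prod>i\<in>I. emeasure ?Q (A i))" .
  qed
qed

lemma prob_space_density_integral_eq_1:
  fixes g :: "'a \<Rightarrow> real"
  assumes g[measurable]: "g \<in> borel_measurable P0"
    and g0: "\<And>x. 0 \<le> g x" and gi: "integrable P0 g" and g1: "(\<integral>x. g x \<partial>P0) = 1"
  shows "prob_space (density P0 (\<lambda>x. ennreal (g x)))"
proof
  have "emeasure (density P0 (\<lambda>x. ennreal (g x))) (space (density P0 (\<lambda>x. ennreal (g x))))
       = (\<integral>\<^sup>+x. ennreal (g x) * indicator (space P0) x \<partial>P0)"
    by (simp add: emeasure_density)
  also have "\<dots> = (\<integral>\<^sup>+x. ennreal (g x) \<partial>P0)"
    by (intro nn_integral_cong) auto
  also have "\<dots> = 1" using nn_integral_eq_integral[OF gi] g0 g1 by simp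
  finally show "emeasure (density P0 (\<lambda>x. ennreal (g x))) (space (density P0 (\<lambda>x. ennreal (g x)))) = 1" .
qed

lemma integral_PiM_density_prod:
  fixes g :: "'a \<Rightarrow> real" and h :: "('i \<Rightarrow> 'a) \<Rightarrow> real"
  assumes P0: "prob_space P0" and g[measurable]: "g \<in> borel_measurable P0"
    and g0: "\<And>x. 0 \<le> g x" and gi: "integrable P0 g" and g1: "(\<integral>x. g x \<partial>P0) = 1"
    and I: "finite I" and h[measurable]: "h \<in> borel_measurable (PiM I (\<lambda>_. P0))"
  shows "(\<integral>\<omega>. h \<omega> \<partial>PiM I (\<lambda>_. density P0 (\<lambda>x. ennreal (g x))))
       = (\<integral>\<omega>. (\<Prod>i\<in>I. g (\<omega> i)) * h \<omega> \<partial>PiM I (\<lambda>_. P0))"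
proof -
  have [measurable]: "(\<lambda>\<omega>. \<Prod>i\<in>I. g (\<omega> i)) \<in> borel_measurable (PiM I (\<lambda>_. P0))"
    by measurable
  have "PiM I (\<lambda>_. density P0 (\<lambda>x. ennreal (g x)))
      = density (PiM I (\<lambda>_. P0)) (\<lambda>\<omega>. \<Prod>i\<in>I. ennreal (g (\<omega> i)))"
    by (intro PiM_density_prod P0 g I prob_space_density_integral_eq_1 g0 gi g1)
  also have "(\<lambda>\<omega>. \<Prod>i\<in>I. ennreal (g (\<omega> i))) = (\<lambda>\<omega>. ennreal (\<Prod>i\<in>I. g (\<omega> i)))"
    using g0 by (intro ext prod_ennreal) auto
  finally show ?thesis by (simp add: integral_density prod_nonneg g0)
qed

lemma integral_PiM_prod_power:
  fixes f :: "'a \<Rightarrow> real"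
  assumes P0: "prob_space P0" and f: "integrable P0 f"
  shows "(\<integral>\<omega>. (\<Prod>i<n. f (\<omega> i)) \<partial>PiM {..<n} (\<lambda>_. P0)) = (\<integral>x. f x \<partial>P0) ^ n"
proof -
  interpret product_sigma_finite "\<lambda>_::nat. P0"
    using P0 by (simp add: product_sigma_finite_def prob_space_imp_sigma_finite)
  show ?thesis using product_integral_prod[of "{..<n}" "\<lambda>_. f"] f by simp
qed

lemma (in finite_measure) integrable_abs_bounded:
  fixes f :: "'a \<Rightarrow> real"
  shows "f \<in> borel_measurable M \<Longrightarrow> (\<And>x. \<bar>f x\<bar> \<le> K) \<Longrightarrow> integrable M f"
  by (rule integrable_const_bound[where B=K]) auto

lemma le_min_one_plus_square:
  fixes L V :: real
  assumes "0 \<le> L" "0 < V"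
  shows "L \<le> (V + 1) * min 1 L + L^2 / (4 * V)"
proof (cases "L \<le> 1")
  case True
  have "0 \<le> V * L" using assms by simp
  moreover have "0 \<le> L^2 / (4 * V)" using assms by simp
  ultimately show ?thesis using True by (simp add: algebra_simps)
next
  case False
  have "0 \<le> (L - 2 * V)^2" by simp
  then have "4 * V * L \<le> L^2 + 4 * V^2" by (simp add: power2_eq_square algebra_simps)
  then have "L \<le> L^2 / (4 * V) + V" using assms by (simp add: field_simps power2_eq_square)
  then show ?thesis using False by simp
qed

lemma min_one_le_test_risk:
  fixes L T :: real
  assumes "0 \<le> L" "0 \<le> T" "T \<le> 1"
  shows "min 1 L \<le> T + L * (1 - T)"
proof (cases "L \<le> 1")
  case True
  have "L * T \<le> T" using True assms by (simp add: mult_left_le_one_le)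
  then show ?thesis using True by (simp add: algebra_simps)
next
  case False
  have "1 - T \<le> L * (1 - T)" using False assms by (simp add: mult_le_cancel_right1)
  then show ?thesis using False by simp
qed

lemma ex_ge_average:
  fixes f :: "'i \<Rightarrow> real"
  assumes X: "finite X" "X \<noteq> {}" and avg: "c \<le> (\<Sum>\<xi>\<in>X. f \<xi>) / card X"
  shows "\<exists>\<xi>\<in>X. c \<le> f \<xi>"
proof (rule ccontr)
  assume "\<not> ?thesis"
  then have "(\<Sum>\<xi>\<in>X. f \<xi>) < (\<Sum>\<xi>\<in>X. c)" using X by (intro sum_strict_mono) auto
  moreover have "0 < real (card X)" using X by (simp add: card_gt_0_iff)
  ultimately show False using avg by (simp add: le_divide_eq mult.commute)
qed

text \<open>Le Cam's bound in second-moment form; \<open>L\<close> is the likelihood ratio of the alternative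
  against \<open>M\<close>.\<close>

lemma (in prob_space) test_risk_ge_second_moment:
  fixes L T :: "'a \<Rightarrow> real" and b V :: real
  assumes L[measurable]: "L \<in> borel_measurable M" and T[measurable]: "T \<in> borel_measurable M"
    and L0: "\<And>\<omega>. 0 \<le> L \<omega>" and Lb: "\<And>\<omega>. L \<omega> \<le> b" and T01: "\<And>\<omega>. 0 \<le> T \<omega> \<and> T \<omega> \<le> 1"
    and EL: "expectation L = 1" and EL2: "expectation (\<lambda>\<omega>. (L \<omega>)^2) \<le> V" and V: "0 < V"
  shows "3 / (4 * (V + 1)) \<le> expectation T + expectation (\<lambda>\<omega>. L \<omega> * (1 - T \<omega>))"
proof -
  have Li: "integrable M L" using L0 Lb by (intro integrable_abs_bounded[of _ b]) auto
  have L2i: "integrable M (\<lambda>\<omega>. (L \<omega>)^2)"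
    using L0 Lb by (intro integrable_abs_bounded[of _ "b^2"]) (auto intro: power_mono)
  have mini: "integrable M (\<lambda>\<omega>. min 1 (L \<omega>))" using L0 by (intro integrable_abs_bounded[of _ 1]) auto
  have Ti: "integrable M T" using T01 by (intro integrable_abs_bounded[of _ 1]) auto
  have LTi: "integrable M (\<lambda>\<omega>. L \<omega> * (1 - T \<omega>))"
  proof (rule integrable_abs_bounded[of _ b])
    show "(\<lambda>\<omega>. L \<omega> * (1 - T \<omega>)) \<in> borel_measurable M" by measurable
    fix \<omega>
    have "L \<omega> * (1 - T \<omega>) \<le> L \<omega> * 1" using L0[of \<omega>] T01[of \<omega>] by (intro mult_left_mono) auto
    then show "\<bar>L \<omega> * (1 - T \<omega>)\<bar> \<le> b" using L0[of \<omega>] T01[of \<omega>] Lb[of \<omega>] by simp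
  qed
  have "1 \<le> (V + 1) * expectation (\<lambda>\<omega>. min 1 (L \<omega>)) + 1/4"
  proof -
    have "1 = expectation L" using EL by simp
    also have "\<dots> \<le> expectation (\<lambda>\<omega>. (V + 1) * min 1 (L \<omega>) + (L \<omega>)^2 / (4 * V))"
      using L0 V by (intro integral_mono Li le_min_one_plus_square
          Bochner_Integration.integrable_add[OF integrable_mult_right[OF mini] integrable_divide[OF L2i]]) auto
    also have "\<dots> = (V + 1) * expectation (\<lambda>\<omega>. min 1 (L \<omega>)) + expectation (\<lambda>\<omega>. (L \<omega>)^2) / (4 * V)"
      by (simp add: mini L2i)
    also have "expectation (\<lambda>\<omega>. (L \<omega>)^2) / (4 * V) \<le> V / (4 * V)"
      using EL2 V by (intro divide_right_mono) auto
    also have "V / (4 * V) = 1/4" using V by simp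
    finally show ?thesis by simp
  qed
  then have "3 / (4 * (V + 1)) \<le> expectation (\<lambda>\<omega>. min 1 (L \<omega>))"
    using V by (simp add: field_simps)
  also have "\<dots> \<le> expectation (\<lambda>\<omega>. T \<omega> + L \<omega> * (1 - T \<omega>))"
    using L0 T01 by (intro integral_mono mini Bochner_Integration.integrable_add Ti LTi min_one_le_test_risk) auto
  also have "\<dots> = expectation T + expectation (\<lambda>\<omega>. L \<omega> * (1 - T \<omega>))"
    using Ti LTi by simp
  finally show ?thesis .
qed

lemma (in prob_space) expectation_square_average:
  fixes G :: "'i \<Rightarrow> 'a \<Rightarrow> real"
  assumes GGi: "\<And>\<xi> \<xi>'. \<xi> \<in> X \<Longrightarrow> \<xi>' \<in> X \<Longrightarrow> integrable M (\<lambda>\<omega>. G \<xi> \<omega> * G \<xi>' \<omega>)"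
  shows "expectation (\<lambda>\<omega>. ((\<Sum>\<xi>\<in>X. G \<xi> \<omega>) / card X)^2)
           = (\<Sum>\<xi>\<in>X. \<Sum>\<xi>'\<in>X. expectation (\<lambda>\<omega>. G \<xi> \<omega> * G \<xi>' \<omega>)) / (card X)^2"
proof -
  have "expectation (\<lambda>\<omega>. ((\<Sum>\<xi>\<in>X. G \<xi> \<omega>) / card X)^2)
      = expectation (\<lambda>\<omega>. (\<Sum>\<xi>\<in>X. \<Sum>\<xi>'\<in>X. G \<xi> \<omega> * G \<xi>' \<omega>) / (card X)^2)"
    by (simp add: power2_eq_square sum_product)
  also have "\<dots> = (\<Sum>\<xi>\<in>X. \<Sum>\<xi>'\<in>X. expectation (\<lambda>\<omega>. G \<xi> \<omega> * G \<xi>' \<omega>)) / (card X)^2"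
    by (simp add: integral_sum GGi integrable_sum)
  finally show ?thesis .
qed

lemma (in prob_space) mixture_test_risk_ge:
  fixes X :: "'i set" and G :: "'i \<Rightarrow> 'a \<Rightarrow> real" and T :: "'a \<Rightarrow> real" and b V :: real
  assumes X: "finite X" "X \<noteq> {}"
    and G[measurable]: "\<And>\<xi>. \<xi> \<in> X \<Longrightarrow> G \<xi> \<in> borel_measurable M"
    and G0: "\<And>\<xi> \<omega>. \<xi> \<in> X \<Longrightarrow> 0 \<le> G \<xi> \<omega>" and Gb: "\<And>\<xi> \<omega>. \<xi> \<in> X \<Longrightarrow> G \<xi> \<omega> \<le> b"
    and EG: "\<And>\<xi>. \<xi> \<in> X \<Longrightarrow> expectation (G \<xi>) = 1"
    and chi2: "(\<Sum>\<xi>\<in>X. \<Sum>\<xi>'\<in>X. expectation (\<lambda>\<omega>. G \<xi> \<omega> * G \<xi>' \<omega>)) / (card X)^2 \<le> V"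
    and T[measurable]: "T \<in> borel_measurable M" and T01: "\<And>\<omega>. 0 \<le> T \<omega> \<and> T \<omega> \<le> 1"
    and V: "0 < V"
  shows "\<exists>\<xi>\<in>X. 3 / (4 * (V + 1)) \<le> expectation T + expectation (\<lambda>\<omega>. G \<xi> \<omega> * (1 - T \<omega>))"
proof -
  define L where "L \<omega> = (\<Sum>\<xi>\<in>X. G \<xi> \<omega>) / card X" for \<omega>
  have card_pos: "0 < real (card X)" using X by (simp add: card_gt_0_iff)
  have b0: "0 \<le> b" using X G0 Gb by (meson all_not_in_conv order_trans)
  have Gi: "integrable M (G \<xi>)" if "\<xi> \<in> X" for \<xi>
    using G0[OF that] Gb[OF that] by (intro integrable_abs_bounded[of _ b]) (auto simp: that)
  have GGi: "integrable M (\<lambda>\<omega>. G \<xi> \<omega> * G \<xi>' \<omega>)" if "\<xi> \<in> X" "\<xi>' \<in> X" for \<xi> \<xi>'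
    using G0[OF that(1)] Gb[OF that(1)] G0[OF that(2)] Gb[OF that(2)] b0
    by (intro integrable_abs_bounded[of _ "b * b"]) (auto simp: that abs_mult intro!: mult_mono)
  have GTi: "integrable M (\<lambda>\<omega>. G \<xi> \<omega> * (1 - T \<omega>))" if "\<xi> \<in> X" for \<xi>
  proof (rule integrable_abs_bounded[of _ b])
    show "(\<lambda>\<omega>. G \<xi> \<omega> * (1 - T \<omega>)) \<in> borel_measurable M" using that by measurable
    fix \<omega>
    have "G \<xi> \<omega> * (1 - T \<omega>) \<le> G \<xi> \<omega> * 1"
      using G0[OF that] T01[of \<omega>] by (intro mult_left_mono) auto
    then show "\<bar>G \<xi> \<omega> * (1 - T \<omega>)\<bar> \<le> b" using G0[OF that] Gb[OF that, of \<omega>] T01[of \<omega>] by simp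
  qed
  have Lm[measurable]: "L \<in> borel_measurable M"
    unfolding L_def using G by (intro borel_measurable_divide borel_measurable_sum) auto
  have L0: "0 \<le> L \<omega>" for \<omega> unfolding L_def using G0 card_pos by (simp add: sum_nonneg)
  have Lb: "L \<omega> \<le> b" for \<omega>
  proof -
    have "(\<Sum>\<xi>\<in>X. G \<xi> \<omega>) \<le> (\<Sum>\<xi>\<in>X. b)" using Gb by (intro sum_mono) auto
    then show ?thesis unfolding L_def using card_pos by (simp add: divide_le_eq mult.commute)
  qed
  have EL: "expectation L = 1"
  proof -
    have "expectation L = (\<Sum>\<xi>\<in>X. expectation (G \<xi>)) / card X"
      unfolding L_def by (simp add: integral_sum Gi)
    then show ?thesis using EG card_pos by simp
  qed
  have "expectation (\<lambda>\<omega>. (L \<omega>)^2) = (\<Sum>\<xi>\<in>X. \<Sum>\<xi>'\<in>X. expectation (\<lambda>\<omega>. G \<xi> \<omega> * G \<xi>' \<omega>)) / (card X)^2"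
    unfolding L_def by (rule expectation_square_average[OF GGi])
  with chi2 have EL2: "expectation (\<lambda>\<omega>. (L \<omega>)^2) \<le> V" by simp
  have "expectation (\<lambda>\<omega>. L \<omega> * (1 - T \<omega>)) = (\<Sum>\<xi>\<in>X. expectation (\<lambda>\<omega>. G \<xi> \<omega> * (1 - T \<omega>))) / card X"
    unfolding L_def by (simp add: sum_distrib_right integral_sum GTi)
  moreover have "expectation T + (\<Sum>\<xi>\<in>X. expectation (\<lambda>\<omega>. G \<xi> \<omega> * (1 - T \<omega>))) / card X
      = (\<Sum>\<xi>\<in>X. expectation T + expectation (\<lambda>\<omega>. G \<xi> \<omega> * (1 - T \<omega>))) / card X"
    using card_pos by (simp add: sum.distrib field_simps)
  ultimately show ?thesis
    using test_risk_ge_second_moment[OF Lm T L0 Lb T01 EL EL2 V] by (intro ex_ge_average[OF X]) simp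
qed

lemma (in prob_space) product_mixture_test_risk_ge:
  fixes X :: "'i set" and g :: "'i \<Rightarrow> 'a \<Rightarrow> real" and T :: "(nat \<Rightarrow> 'a) \<Rightarrow> real" and b V :: real
  assumes X: "finite X" "X \<noteq> {}"
    and g[measurable]: "\<And>\<xi>. \<xi> \<in> X \<Longrightarrow> g \<xi> \<in> borel_measurable M"
    and g0: "\<And>\<xi> x. \<xi> \<in> X \<Longrightarrow> 0 \<le> g \<xi> x" and gb: "\<And>\<xi> x. \<xi> \<in> X \<Longrightarrow> g \<xi> x \<le> b"
    and g1: "\<And>\<xi>. \<xi> \<in> X \<Longrightarrow> expectation (g \<xi>) = 1"
    and T: "T \<in> tests M n" and V: "0 < V"
    and chi2: "(\<Sum>\<xi>\<in>X. \<Sum>\<xi>'\<in>X. expectation (\<lambda>x. g \<xi> x * g \<xi>' x) ^ n) / (card X)^2 \<le> V"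
  shows "\<exists>\<xi>\<in>X. 3 / (4 * (V + 1)) \<le> (\<integral>\<omega>. T \<omega> \<partial>PiM {..<n} (\<lambda>_. M))
            + (\<integral>\<omega>. 1 - T \<omega> \<partial>PiM {..<n} (\<lambda>_. density M (\<lambda>x. ennreal (g \<xi> x))))"
proof -
  interpret Mn: prob_space "PiM {..<n} (\<lambda>_. M)" by (intro prob_space_PiM prob_space_axioms)
  define G where "G \<xi> \<omega> = (\<Prod>i<n. g \<xi> (\<omega> i))" for \<xi> \<omega>
  have b0: "0 \<le> b" using X g0 gb by (meson all_not_in_conv order_trans)
  have Tm[measurable]: "T \<in> borel_measurable (PiM {..<n} (\<lambda>_. M))" and T01: "\<And>\<omega>. 0 \<le> T \<omega> \<and> T \<omega> \<le> 1"
    using T by (auto simp: tests_def)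
  have gi: "integrable M (g \<xi>)" if "\<xi> \<in> X" for \<xi>
    using g0[OF that] gb[OF that] by (intro integrable_abs_bounded[of _ b]) (auto simp: that)
  have ggi: "integrable M (\<lambda>x. g \<xi> x * g \<xi>' x)" if "\<xi> \<in> X" "\<xi>' \<in> X" for \<xi> \<xi>'
    using g0[OF that(1)] gb[OF that(1)] g0[OF that(2)] gb[OF that(2)] b0
    by (intro integrable_abs_bounded[of _ "b * b"]) (auto simp: that abs_mult intro!: mult_mono)
  have Gm: "G \<xi> \<in> borel_measurable (PiM {..<n} (\<lambda>_. M))" if "\<xi> \<in> X" for \<xi>
    using g[OF that] unfolding G_def by measurable
  have G0: "0 \<le> G \<xi> \<omega>" if "\<xi> \<in> X" for \<xi> \<omega>
    unfolding G_def using g0[OF that] by (simp add: prod_nonneg)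
  have Gb: "G \<xi> \<omega> \<le> b ^ n" if "\<xi> \<in> X" for \<xi> \<omega>
  proof -
    have "G \<xi> \<omega> \<le> (\<Prod>i<n. b)" unfolding G_def using g0[OF that] gb[OF that] by (intro prod_mono) auto
    then show ?thesis by simp
  qed
  have EG: "Mn.expectation (G \<xi>) = 1" if "\<xi> \<in> X" for \<xi>
    using integral_PiM_prod_power[OF prob_space_axioms gi[OF that], of n] g1[OF that]
    by (simp add: G_def[abs_def])
  have EGG: "Mn.expectation (\<lambda>\<omega>. G \<xi> \<omega> * G \<xi>' \<omega>) = expectation (\<lambda>x. g \<xi> x * g \<xi>' x) ^ n"
    if "\<xi> \<in> X" "\<xi>' \<in> X" for \<xi> \<xi>'
    using integral_PiM_prod_power[OF prob_space_axioms ggi[OF that], of n]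
    by (simp add: G_def prod.distrib)
  have type2: "(\<integral>\<omega>. 1 - T \<omega> \<partial>PiM {..<n} (\<lambda>_. density M (\<lambda>x. ennreal (g \<xi> x))))
      = Mn.expectation (\<lambda>\<omega>. G \<xi> \<omega> * (1 - T \<omega>))" if "\<xi> \<in> X" for \<xi>
    using integral_PiM_density_prod[OF prob_space_axioms g[OF that] g0[OF that] gi[OF that] g1[OF that],
        of "{..<n}" "\<lambda>\<omega>. 1 - T \<omega>"]
    by (simp add: G_def)
  have "(\<Sum>\<xi>\<in>X. \<Sum>\<xi>'\<in>X. Mn.expectation (\<lambda>\<omega>. G \<xi> \<omega> * G \<xi>' \<omega>)) / (card X)^2 \<le> V"
    using chi2 by (simp add: EGG)
  from Mn.mixture_test_risk_ge[OF X Gm G0 Gb EG this Tm T01 V]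
  show ?thesis using type2 by auto
qed

lemma Fclass_cong_AE:
  assumes phi[measurable]: "\<And>k. phi k \<in> borel_measurable P0"
    and f[measurable]: "f \<in> borel_measurable P0" and h: "h \<in> Fclass P0 lam phi \<theta> M"
    and ae: "AE x in P0. f x = h x"
  shows "f \<in> Fclass P0 lam phi \<theta> M"
proof -
  have hm[measurable]: "h \<in> borel_measurable P0"
    using h by (auto simp: Fclass_def in_RKHS_def L2_def split: if_splits)
  have L2eq: "L2 P0 f \<longleftrightarrow> L2 P0 h"
  proof -
    have "integrable P0 (\<lambda>x. (f x)^2) \<longleftrightarrow> integrable P0 (\<lambda>x. (h x)^2)"
      by (rule integrable_cong_AE) (use ae in auto)
    then show ?thesis unfolding L2_def by simp
  qed
  have ieq: "inner_L2 P0 f (phi k) = inner_L2 P0 h (phi k)" for k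
    unfolding inner_L2_def using ae by (intro integral_cong_AE) auto
  have meq: "(\<integral>x. f x \<partial>P0) = (\<integral>x. h x \<partial>P0)"
    using ae by (intro integral_cong_AE) auto
  have Req: "in_RKHS P0 lam phi f \<longleftrightarrow> in_RKHS P0 lam phi h"
    unfolding in_RKHS_def using L2eq meq ieq by simp
  have neq: "rkhs_norm P0 lam phi f = rkhs_norm P0 lam phi h"
    unfolding rkhs_norm_def using ieq by simp
  have deq: "norm_L2 P0 (\<lambda>x. f x - g x) = norm_L2 P0 (\<lambda>x. h x - g x)" if "in_RKHS P0 lam phi g" for g
  proof -
    have [measurable]: "g \<in> borel_measurable P0" using that by (simp add: in_RKHS_def L2_def)
    show ?thesis unfolding norm_L2_def using ae by (intro arg_cong[where f=sqrt] integral_cong_AE) auto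
  qed
  show ?thesis
  proof (cases "\<theta> = 0")
    case True then show ?thesis using h Req neq by (simp add: Fclass_def)
  next
    case False
    have "\<exists>g. in_RKHS P0 lam phi g \<and> rkhs_norm P0 lam phi g \<le> R \<and>
                 norm_L2 P0 (\<lambda>x. f x - g x) \<le> M * R powr (- 1 / \<theta>)" if R: "R > 0" for R
    proof -
      obtain g where "in_RKHS P0 lam phi g" "rkhs_norm P0 lam phi g \<le> R"
          "norm_L2 P0 (\<lambda>x. h x - g x) \<le> M * R powr (- 1 / \<theta>)"
        using h False R by (auto simp: Fclass_def)
      then show ?thesis using deq by (intro exI[of _ g]) simp
    qed
    then show ?thesis using False L2eq h by (simp add: Fclass_def)
  qed
qed

lemma sqrt_mult_sqrt_powr_le:
  fixes d S \<theta> M :: real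
  assumes d: "0 < d" and S: "0 \<le> S" and \<theta>: "0 < \<theta>" and M: "0 < M"
    and h: "d powr \<theta> * S \<le> M powr (2 * \<theta>)"
  shows "sqrt d * (sqrt S) powr (1/\<theta>) \<le> M"
proof -
  have "(d powr \<theta> * S) powr (1 / (2 * \<theta>)) \<le> (M powr (2 * \<theta>)) powr (1 / (2 * \<theta>))"
    using h d S \<theta> by (intro powr_mono2) auto
  also have "(M powr (2 * \<theta>)) powr (1 / (2 * \<theta>)) = M"
    using \<theta> M by (simp add: powr_powr)
  also have "(d powr \<theta> * S) powr (1 / (2 * \<theta>)) = (d powr \<theta>) powr (1 / (2 * \<theta>)) * S powr (1 / (2 * \<theta>))"
    using d S by (intro powr_mult; simp)
  also have "(d powr \<theta>) powr (1 / (2 * \<theta>)) = sqrt d"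
  proof -
    have "(d powr \<theta>) powr (1 / (2 * \<theta>)) = d powr (\<theta> * (1 / (2 * \<theta>)))" by (rule powr_powr)
    also have "\<theta> * (1 / (2 * \<theta>)) = 1/2" using \<theta> by simp
    finally show ?thesis using d by (simp add: powr_half_sqrt)
  qed
  also have "S powr (1 / (2 * \<theta>)) = (sqrt S) powr (1/\<theta>)"
  proof -
    have "(sqrt S) powr (1/\<theta>) = (S powr (1/2)) powr (1/\<theta>)" using S by (simp add: powr_half_sqrt)
    also have "\<dots> = S powr (1/2 * (1/\<theta>))" by (rule powr_powr)
    finally show ?thesis by simp
  qed
  finally show ?thesis .
qed

text \<open>For \<open>\<theta> > 0\<close> the approximants are \<open>u\<close> itself when \<open>R \<ge> \<parallel>u\<parallel>\<^sub>K\<close> and \<open>0\<close> otherwise.\<close>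

lemma in_Fclass_if_in_RKHS:
  fixes u :: "'a \<Rightarrow> real"
  assumes lam_pos: "\<And>k. 0 < lam k" and u: "in_RKHS P0 lam phi u" and M: "0 < M" and \<theta>: "0 \<le> \<theta>"
    and pos: "0 < (norm_L2 P0 u)^2"
    and interp: "((norm_L2 P0 u)^2) powr \<theta> * (rkhs_norm P0 lam phi u)^2
                   \<le> (if \<theta> = 0 then M^2 else M powr (2 * \<theta>))"
  shows "u \<in> Fclass P0 lam phi \<theta> M"
proof -
  define N where "N = rkhs_norm P0 lam phi u"
  have "0 \<le> (\<Sum>k. (inner_L2 P0 u (phi k))^2 / lam k)"
    using u lam_pos by (intro suminf_nonneg) (auto simp: in_RKHS_def less_imp_le)
  then have N0: "0 \<le> N" by (simp add: N_def rkhs_norm_def)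
  have nu0: "0 \<le> norm_L2 P0 u" using pos by (simp add: norm_L2_def)
  show ?thesis
  proof (cases "\<theta> = 0")
    case True
    then have "N^2 \<le> M^2" using interp pos by (simp add: N_def)
    then have "N \<le> M" by (rule power2_le_imp_le) (use M in simp)
    then show ?thesis using True u by (simp add: Fclass_def N_def)
  next
    case False
    then have \<theta>p: "0 < \<theta>" using \<theta> by simp
    have "sqrt ((norm_L2 P0 u)^2) * sqrt (N^2) powr (1/\<theta>) \<le> M"
      using interp False by (intro sqrt_mult_sqrt_powr_le[OF pos _ \<theta>p M]) (simp_all add: N_def)
    then have cls: "norm_L2 P0 u * N powr (1/\<theta>) \<le> M" using N0 nu0 by simp
    have zero: "in_RKHS P0 lam phi (\<lambda>_. 0)" "rkhs_norm P0 lam phi (\<lambda>_. 0) = 0"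
      by (simp_all add: in_RKHS_def L2_def inner_L2_def rkhs_norm_def)
    have "\<exists>g. in_RKHS P0 lam phi g \<and> rkhs_norm P0 lam phi g \<le> R \<and>
               norm_L2 P0 (\<lambda>x. u x - g x) \<le> M * R powr (- 1 / \<theta>)" if R: "R > 0" for R
    proof (cases "N \<le> R")
      case True
      have "norm_L2 P0 (\<lambda>x. u x - u x) = 0" by (simp add: norm_L2_def)
      also have "0 \<le> M * R powr (- 1 / \<theta>)" using M by simp
      finally show ?thesis using u True by (intro exI[of _ u]) (simp add: N_def)
    next
      case False
      then have NR: "R < N" by simp
      have Npos: "0 < N powr (1/\<theta>)" using NR R by simp
      have "norm_L2 P0 (\<lambda>x. u x - 0) = norm_L2 P0 u" by simp
      also have "\<dots> \<le> M / N powr (1/\<theta>)" using cls by (simp only: pos_le_divide_eq[OF Npos])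
      also have "M / N powr (1/\<theta>) = M * N powr (-1/\<theta>)"
        by (simp add: powr_minus divide_inverse minus_divide_left[symmetric])
      also have "\<dots> \<le> M * R powr (-1/\<theta>)"
        using M R NR \<theta>p by (intro mult_left_mono powr_mono2') auto
      finally show ?thesis using zero R by (intro exI[of _ "\<lambda>_. 0"]) simp
    qed
    then show ?thesis using False u by (simp add: Fclass_def in_RKHS_def)
  qed
qed

locale bounded_eigenbasis = prob_space P0 for P0 :: "'a measure" +
  fixes phi :: "nat \<Rightarrow> 'a \<Rightarrow> real" and C :: real
  assumes phi_measurable: "phi k \<in> borel_measurable P0"
    and phi_mean: "(\<integral>x. phi k x \<partial>P0) = 0"
    and phi_orthonormal: "inner_L2 P0 (phi j) (phi k) = (if j = k then 1 else 0)"
    and phi_bounded: "AE x in P0. \<bar>phi k x\<bar> \<le> C"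
    and C_nonneg: "0 \<le> C"
begin

declare phi_measurable[measurable]

text \<open>\<open>phi k\<close> is bounded only almost everywhere; clipping it gives a version that is bounded
  everywhere, so that the perturbed densities below are nonnegative everywhere.\<close>

definition phi_clip :: "nat \<Rightarrow> 'a \<Rightarrow> real" where
  "phi_clip k x = max (-C) (min C (phi k x))"

definition perturbation :: "nat \<Rightarrow> (nat \<Rightarrow> real) \<Rightarrow> 'a \<Rightarrow> real" where
  "perturbation B c x = (\<Sum>k<B. c k * phi_clip k x)"

definition perturbed_density :: "nat \<Rightarrow> real \<Rightarrow> (nat \<Rightarrow> real) \<Rightarrow> 'a \<Rightarrow> real" where
  "perturbed_density B a \<xi> x = 1 + perturbation B (\<lambda>k. a * \<xi> k) x"

lemma phi_clip_measurable[measurable]: "phi_clip k \<in> borel_measurable P0"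
  unfolding phi_clip_def by measurable

lemma perturbation_measurable[measurable]: "perturbation B c \<in> borel_measurable P0"
  unfolding perturbation_def by measurable

lemma perturbed_density_measurable[measurable]: "perturbed_density B a \<xi> \<in> borel_measurable P0"
  unfolding perturbed_density_def by measurable

lemma abs_phi_clip_le: "\<bar>phi_clip k x\<bar> \<le> C"
  using C_nonneg unfolding phi_clip_def by auto

lemma AE_phi_clip_eq: "AE x in P0. phi_clip k x = phi k x"
  using phi_bounded[of k] by eventually_elim (auto simp: phi_clip_def)

lemma integral_mult_phi_clip_eq:
  assumes [measurable]: "h \<in> borel_measurable P0"
  shows "(\<integral>x. h x * phi_clip j x \<partial>P0) = (\<integral>x. h x * phi j x \<partial>P0)"
  using AE_phi_clip_eq[of j] by (intro integral_cong_AE) auto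

lemma integral_phi_clip: "(\<integral>x. phi_clip k x \<partial>P0) = 0"
  using integral_mult_phi_clip_eq[of "\<lambda>_. 1" k] phi_mean[of k] by simp

lemma integral_phi_clip_mult: "(\<integral>x. phi_clip j x * phi_clip k x \<partial>P0) = (if j = k then 1 else 0)"
proof -
  have "(\<integral>x. phi_clip j x * phi_clip k x \<partial>P0) = (\<integral>x. phi j x * phi k x \<partial>P0)"
    using AE_phi_clip_eq[of j] AE_phi_clip_eq[of k] by (intro integral_cong_AE) auto
  then show ?thesis using phi_orthonormal by (simp add: inner_L2_def)
qed

lemma abs_perturbation_le: "\<bar>perturbation B c x\<bar> \<le> (\<Sum>k<B. \<bar>c k\<bar>) * C"
proof -
  have "\<bar>perturbation B c x\<bar> \<le> (\<Sum>k<B. \<bar>c k * phi_clip k x\<bar>)"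
    unfolding perturbation_def by (rule sum_abs)
  also have "\<dots> \<le> (\<Sum>k<B. \<bar>c k\<bar> * C)"
    by (intro sum_mono) (auto simp: abs_mult abs_phi_clip_le intro!: mult_left_mono)
  finally show ?thesis by (simp add: sum_distrib_right)
qed

lemma integrable_perturbation: "integrable P0 (perturbation B c)"
  by (rule integrable_abs_bounded[OF perturbation_measurable abs_perturbation_le])

lemma integrable_perturbation_mult: "integrable P0 (\<lambda>x. perturbation B c x * perturbation B' c' x)"
  by (rule integrable_abs_bounded[where K="((\<Sum>k<B. \<bar>c k\<bar>) * C) * ((\<Sum>k<B'. \<bar>c' k\<bar>) * C)"])
     (auto simp: abs_mult abs_perturbation_le intro!: mult_mono C_nonneg mult_nonneg_nonneg sum_nonneg)

lemma integral_perturbation: "(\<integral>x. perturbation B c x \<partial>P0) = 0"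
proof -
  have "integrable P0 (phi_clip k)" for k
    by (rule integrable_abs_bounded[OF phi_clip_measurable abs_phi_clip_le])
  then show ?thesis unfolding perturbation_def by (simp add: integral_sum integral_phi_clip)
qed

lemma integral_perturbation_mult_phi_clip:
  "(\<integral>x. perturbation B c x * phi_clip j x \<partial>P0) = (if j < B then c j else 0)"
proof -
  have "integrable P0 (\<lambda>x. phi_clip k x * phi_clip j x)" for k
    by (rule integrable_abs_bounded[where K="C * C"])
       (auto simp: abs_mult abs_phi_clip_le intro!: mult_mono C_nonneg)
  then have "(\<integral>x. perturbation B c x * phi_clip j x \<partial>P0)
      = (\<Sum>k<B. c k * (\<integral>x. phi_clip k x * phi_clip j x \<partial>P0))"
    unfolding perturbation_def by (simp add: sum_distrib_right mult.assoc integral_sum)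
  also have "\<dots> = (\<Sum>k<B. if k = j then c k else 0)"
    by (intro sum.cong refl) (simp add: integral_phi_clip_mult)
  also have "\<dots> = (if j < B then c j else 0)"
    by (simp add: sum.delta)
  finally show ?thesis .
qed

lemma integral_perturbation_mult:
  "(\<integral>x. perturbation B c x * perturbation B c' x \<partial>P0) = (\<Sum>k<B. c k * c' k)"
proof -
  have "integrable P0 (\<lambda>x. perturbation B c x * phi_clip k x)" for k
    by (rule integrable_abs_bounded[where K="((\<Sum>k<B. \<bar>c k\<bar>) * C) * C"])
       (auto simp: abs_mult abs_phi_clip_le abs_perturbation_le
          intro!: mult_mono C_nonneg mult_nonneg_nonneg sum_nonneg)
  then have "(\<integral>x. perturbation B c x * perturbation B c' x \<partial>P0)
      = (\<Sum>k<B. c' k * (\<integral>x. perturbation B c x * phi_clip k x \<partial>P0))"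
    unfolding perturbation_def[of B c']
    by (simp add: sum_distrib_left mult.assoc mult.left_commute integral_sum)
  also have "\<dots> = (\<Sum>k<B. c k * c' k)"
    by (intro sum.cong refl) (simp add: integral_perturbation_mult_phi_clip)
  finally show ?thesis .
qed

lemma abs_sign_perturbation_le:
  assumes "0 \<le> a" "\<xi> \<in> signs B"
  shows "\<bar>perturbation B (\<lambda>k. a * \<xi> k) x\<bar> \<le> a * B * C"
proof -
  have "(\<Sum>k<B. \<bar>a * \<xi> k\<bar>) = (\<Sum>k<B. a)"
  proof (intro sum.cong refl)
    fix k assume "k \<in> {..<B}"
    then show "\<bar>a * \<xi> k\<bar> = a" using signs_cases[OF assms(2), of k] assms(1) by auto
  qed
  then show ?thesis using abs_perturbation_le[of B "\<lambda>k. a * \<xi> k" x] by (simp add: mult_ac)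
qed

lemma perturbed_density_bounds:
  assumes "0 \<le> a" "\<xi> \<in> signs B" "a * B * C \<le> 1/2"
  shows "0 \<le> perturbed_density B a \<xi> x" "perturbed_density B a \<xi> x \<le> 3/2"
  using abs_sign_perturbation_le[OF assms(1,2), of x] assms(3)
  by (auto simp: perturbed_density_def abs_le_iff)

lemma integrable_perturbed_density: "integrable P0 (perturbed_density B a \<xi>)"
  unfolding perturbed_density_def[abs_def]
  by (intro Bochner_Integration.integrable_add integrable_const integrable_perturbation)

lemma integral_perturbed_density: "(\<integral>x. perturbed_density B a \<xi> x \<partial>P0) = 1"
  using integrable_perturbation by (simp add: perturbed_density_def integral_perturbation prob_space)

lemma integral_perturbed_density_mult:
  "(\<integral>x. perturbed_density B a \<xi> x * perturbed_density B a \<xi>' x \<partial>P0) = 1 + a^2 * (\<Sum>k<B. \<xi> k * \<xi>' k)"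
proof -
  let ?u = "perturbation B (\<lambda>k. a * \<xi> k)" and ?v = "perturbation B (\<lambda>k. a * \<xi>' k)"
  have "(\<integral>x. perturbed_density B a \<xi> x * perturbed_density B a \<xi>' x \<partial>P0)
      = (\<integral>x. 1 + ?u x + ?v x + ?u x * ?v x \<partial>P0)"
    by (simp add: perturbed_density_def algebra_simps)
  also have "\<dots> = 1 + (\<Sum>k<B. a * \<xi> k * (a * \<xi>' k))"
    using integrable_perturbation integrable_perturbation_mult by (simp add: integral_perturbation integral_perturbation_mult prob_space)
  finally show ?thesis by (simp add: sum_distrib_left power2_eq_square mult_ac)
qed

lemma sign_perturbation_in_Fclass:
  fixes lam :: "nat \<Rightarrow> real"
  assumes lam_pos: "\<And>k. 0 < lam k" and \<xi>: "\<xi> \<in> signs B" and pos: "0 < a^2 * B"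
    and M: "0 < M" and \<theta>: "0 \<le> \<theta>"
    and interp: "(a^2 * B) powr \<theta> * (\<Sum>k<B. a^2 / lam k) \<le> (if \<theta> = 0 then M^2 else M powr (2 * \<theta>))"
  shows "perturbation B (\<lambda>k. a * \<xi> k) \<in> Fclass P0 lam phi \<theta> M"
    and "(\<integral>x. (perturbation B (\<lambda>k. a * \<xi> k) x)^2 \<partial>P0) = a^2 * B"
proof -
  define c where "c k = a * \<xi> k" for k
  define u where "u = perturbation B c"
  have c2: "(c k)^2 = a^2" if "k < B" for k using signs_cases[OF \<xi> that] by (auto simp: c_def)
  have inner_u: "inner_L2 P0 u (phi j) = (if j < B then c j else 0)" for j
    unfolding inner_L2_def u_def
    by (simp add: integral_mult_phi_clip_eq[symmetric] integral_perturbation_mult_phi_clip)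
  have sums_u: "(\<lambda>j. (inner_L2 P0 u (phi j))^2 / lam j) sums (\<Sum>k<B. a^2 / lam k)"
  proof -
    have "(\<lambda>j. (inner_L2 P0 u (phi j))^2 / lam j) sums (\<Sum>j<B. (inner_L2 P0 u (phi j))^2 / lam j)"
      by (rule sums_finite) (auto simp: inner_u)
    also have "(\<Sum>j<B. (inner_L2 P0 u (phi j))^2 / lam j) = (\<Sum>k<B. a^2 / lam k)"
      by (intro sum.cong refl) (auto simp: inner_u c2)
    finally show ?thesis .
  qed
  have uu: "(\<integral>x. (u x)^2 \<partial>P0) = a^2 * B"
  proof -
    have "(\<Sum>k<B. c k * c k) = (\<Sum>k<B. a^2)"
      by (intro sum.cong refl) (metis c2 lessThan_iff power2_eq_square)
    then show ?thesis using integral_perturbation_mult[of B c c] by (simp add: u_def power2_eq_square)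
  qed
  then show "(\<integral>x. (perturbation B (\<lambda>k. a * \<xi> k) x)^2 \<partial>P0) = a^2 * B"
    by (simp add: u_def c_def[abs_def])
  have u2i: "integrable P0 (\<lambda>x. (u x)^2)"
    using integrable_perturbation_mult[of B c B c] by (simp add: u_def power2_eq_square)
  have RKu: "in_RKHS P0 lam phi u"
    unfolding in_RKHS_def L2_def using u2i sums_u by (auto simp: u_def integral_perturbation sums_summable)
  have norm_u: "(norm_L2 P0 u)^2 = a^2 * B"
    unfolding norm_L2_def using uu pos by simp
  have rkhs_u: "(rkhs_norm P0 lam phi u)^2 = (\<Sum>k<B. a^2 / lam k)"
    unfolding rkhs_norm_def using sums_unique[OF sums_u, symmetric] lam_pos
    by (simp add: less_imp_le sum_nonneg)
  have "u \<in> Fclass P0 lam phi \<theta> M"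
    by (rule in_Fclass_if_in_RKHS[OF lam_pos RKu M \<theta>]) (use pos interp in \<open>simp_all add: norm_u rkhs_u\<close>)
  then show "perturbation B (\<lambda>k. a * \<xi> k) \<in> Fclass P0 lam phi \<theta> M"
    by (simp add: u_def c_def[abs_def])
qed

lemma perturbed_density_in_Pclass:
  fixes lam :: "nat \<Rightarrow> real"
  assumes lam_pos: "\<And>k. 0 < lam k" and a: "0 \<le> a" and \<xi>: "\<xi> \<in> signs B"
    and small: "a * B * C \<le> 1/2" and pos: "0 < a^2 * B" and \<Delta>: "\<Delta> \<le> a^2 * B"
    and M: "0 < M" and \<theta>: "0 \<le> \<theta>"
    and interp: "(a^2 * B) powr \<theta> * (\<Sum>k<B. a^2 / lam k) \<le> (if \<theta> = 0 then M^2 else M powr (2 * \<theta>))"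
  shows "density P0 (\<lambda>x. ennreal (perturbed_density B a \<xi> x)) \<in> Pclass P0 lam phi \<Delta> \<theta> M"
proof -
  define u where "u = perturbation B (\<lambda>k. a * \<xi> k)"
  define Q where "Q = density P0 (\<lambda>x. ennreal (perturbed_density B a \<xi> x))"
  note uF = sign_perturbation_in_Fclass(1)[OF lam_pos \<xi> pos M \<theta> interp, folded u_def]
  note uu = sign_perturbation_in_Fclass(2)[OF lam_pos \<xi> pos M \<theta> interp, folded u_def]
  have g0: "0 \<le> perturbed_density B a \<xi> x" for x by (rule perturbed_density_bounds[OF a \<xi> small])
  have "AE x in P0. ennreal (perturbed_density B a \<xi> x) = RN_deriv P0 Q x"
    using sigma_finite_measure.RN_deriv_unique[OF prob_space_imp_sigma_finite[OF prob_space_axioms] _ Q_def[symmetric]]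
    by simp
  then have dev: "AE x in P0. dev P0 Q x = u x"
  proof eventually_elim
    case (elim x)
    have "dev P0 Q x = enn2real (ennreal (perturbed_density B a \<xi> x)) - 1"
      by (simp add: dev_def elim)
    then show ?case using g0[of x] by (simp add: perturbed_density_def u_def)
  qed
  have "dev P0 Q \<in> Fclass P0 lam phi \<theta> M"
    by (rule Fclass_cong_AE[OF phi_measurable _ uF dev]) (simp add: dev_def)
  moreover have "(\<integral>x. (dev P0 Q x)^2 \<partial>P0) = (\<integral>x. (u x)^2 \<partial>P0)"
    using dev by (intro integral_cong_AE) (auto simp: dev_def u_def)
  then have "(norm_L2 P0 (dev P0 Q))^2 = a^2 * B"
    using uu pos unfolding norm_L2_def by simp
  moreover have "prob_space Q"
    unfolding Q_def by (intro prob_space_density_integral_eq_1 perturbed_density_measurable g0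
        integrable_perturbed_density integral_perturbed_density)
  moreover have "absolutely_continuous P0 Q"
    unfolding Q_def by (rule absolutely_continuousI_density) simp
  ultimately show ?thesis using \<Delta> by (simp add: Pclass_def Q_def)
qed

lemma sign_mixture_chi_square_le:
  assumes a: "0 \<le> a" and small: "a * B * C \<le> 1/2" and t: "n * a^2 \<le> 1"
  shows "(\<Sum>\<xi>\<in>signs B. \<Sum>\<xi>'\<in>signs B.
            (\<integral>x. perturbed_density B a \<xi> x * perturbed_density B a \<xi>' x \<partial>P0) ^ n) / (card (signs B))^2
           \<le> exp (B * (n * a^2)^2)"
proof -
  have "(\<Sum>\<xi>\<in>signs B. \<Sum>\<xi>'\<in>signs B. (\<integral>x. perturbed_density B a \<xi> x * perturbed_density B a \<xi>' x \<partial>P0) ^ n)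
      \<le> (\<Sum>\<xi>\<in>signs B. \<Sum>\<xi>'\<in>signs B. exp ((n * a^2) * (\<Sum>k<B. \<xi> k * \<xi>' k)))"
  proof (intro sum_mono)
    fix \<xi> \<xi>' assume \<xi>: "\<xi> \<in> signs B" and \<xi>': "\<xi>' \<in> signs B"
    have "0 \<le> (\<integral>x. perturbed_density B a \<xi> x * perturbed_density B a \<xi>' x \<partial>P0)"
      using perturbed_density_bounds(1)[OF a \<xi> small] perturbed_density_bounds(1)[OF a \<xi>' small]
      by (intro integral_nonneg_AE AE_I2 mult_nonneg_nonneg)
    then have "(\<integral>x. perturbed_density B a \<xi> x * perturbed_density B a \<xi>' x \<partial>P0) ^ n
        \<le> exp (a^2 * (\<Sum>k<B. \<xi> k * \<xi>' k)) ^ n"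
      unfolding integral_perturbed_density_mult
      by (intro power_mono) auto
    also have "\<dots> = exp ((n * a^2) * (\<Sum>k<B. \<xi> k * \<xi>' k))"
      by (simp add: exp_of_nat_mult[symmetric] mult_ac)
    finally show "(\<integral>x. perturbed_density B a \<xi> x * perturbed_density B a \<xi>' x \<partial>P0) ^ n
        \<le> exp ((n * a^2) * (\<Sum>k<B. \<xi> k * \<xi>' k))" .
  qed
  also have "\<dots> \<le> 4 ^ B * exp (B * (n * a^2)^2)"
    using sum_sign_vectors_exp_le[of "{..<B}" "n * a^2"] t by (simp add: signs_def)
  also have "(4::real) ^ B = (real (card (signs B)))^2"
  proof -
    have "(real (card (signs B)))^2 = ((2::real) ^ B)^2" by (simp add: card_signs)
    also have "\<dots> = (2^2) ^ B" by (simp only: power_mult[symmetric] mult.commute)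
    finally show ?thesis by simp
  qed
  finally show ?thesis by (simp add: pos_divide_le_eq card_signs mult.commute)
qed

lemma minimax_risk_ge:
  fixes lam :: "nat \<Rightarrow> real"
  assumes lam_pos: "\<And>k. 0 < lam k" and a: "0 \<le> a" and small: "a * B * C \<le> 1/2"
    and t: "n * a^2 \<le> 1" and pos: "0 < a^2 * B" and \<Delta>: "\<Delta> \<le> a^2 * B"
    and M: "0 < M" and \<theta>: "0 \<le> \<theta>"
    and interp: "(a^2 * B) powr \<theta> * (\<Sum>k<B. a^2 / lam k) \<le> (if \<theta> = 0 then M^2 else M powr (2 * \<theta>))"
  shows "ereal (3 / (4 * (exp (B * (n * a^2)^2) + 1)))
           \<le> (INF T\<in>tests P0 n. ereal (\<integral>\<omega>. T \<omega> \<partial>PiM {..<n} (\<lambda>_. P0)) + type2 P0 lam phi n T \<Delta> \<theta> M)"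
proof (rule INF_greatest)
  fix T assume T: "T \<in> tests P0 n"
  obtain \<xi> where \<xi>: "\<xi> \<in> signs B" and risk: "3 / (4 * (exp (B * (n * a^2)^2) + 1))
      \<le> (\<integral>\<omega>. T \<omega> \<partial>PiM {..<n} (\<lambda>_. P0))
        + (\<integral>\<omega>. 1 - T \<omega> \<partial>PiM {..<n} (\<lambda>_. density P0 (\<lambda>x. ennreal (perturbed_density B a \<xi> x))))"
    using product_mixture_test_risk_ge[OF finite_signs signs_nonempty perturbed_density_measurable
        perturbed_density_bounds(1)[OF a _ small] perturbed_density_bounds(2)[OF a _ small]
        integral_perturbed_density T exp_gt_zero sign_mixture_chi_square_le[OF a small t]]
    by blast
  have type2_ge: "ereal (\<integral>\<omega>. 1 - T \<omega> \<partial>PiM {..<n} (\<lambda>_. density P0 (\<lambda>x. ennreal (perturbed_density B a \<xi> x))))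
      \<le> type2 P0 lam phi n T \<Delta> \<theta> M"
    unfolding type2_def
    by (rule SUP_upper, rule perturbed_density_in_Pclass[OF lam_pos a \<xi> small pos \<Delta> M \<theta> interp])
  show "ereal (3 / (4 * (exp (B * (n * a^2)^2) + 1)))
      \<le> ereal (\<integral>\<omega>. T \<omega> \<partial>PiM {..<n} (\<lambda>_. P0)) + type2 P0 lam phi n T \<Delta> \<theta> M"
  proof -
    have "ereal (3 / (4 * (exp (B * (n * a^2)^2) + 1)))
        \<le> ereal (\<integral>\<omega>. T \<omega> \<partial>PiM {..<n} (\<lambda>_. P0))
          + ereal (\<integral>\<omega>. 1 - T \<omega> \<partial>PiM {..<n} (\<lambda>_. density P0 (\<lambda>x. ennreal (perturbed_density B a \<xi> x))))"
      using risk by simp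
    also have "\<dots> \<le> ereal (\<integral>\<omega>. T \<omega> \<partial>PiM {..<n} (\<lambda>_. P0)) + type2 P0 lam phi n T \<Delta> \<theta> M"
      using type2_ge by (rule add_left_mono)
    finally show ?thesis .
  qed
qed

end

lemma eventually_real_powr_less:
  fixes p \<epsilon> :: real
  assumes "p < 0" "0 < \<epsilon>"
  shows "\<forall>\<^sub>F n in sequentially. real n powr p < \<epsilon>"
  using order_tendstoD(2)[OF tendsto_neg_powr[OF assms(1) filterlim_real_sequentially] assms(2)] .

lemma sum_le_of_decay:
  fixes lam :: "nat \<Rightarrow> real" and a c s :: real and B k0 :: nat
  assumes lam_pos: "\<And>k. 0 < lam k" and lam_dec: "decseq lam"
    and decay: "\<And>k. k0 \<le> k \<Longrightarrow> c < real (Suc k) powr (2 * s) * lam k" and c: "0 < c"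
    and B: "k0 < B"
  shows "(\<Sum>k<B. a^2 / lam k) \<le> a^2 * B * (B powr (2 * s) / c)"
proof -
  have "a^2 / lam k \<le> a^2 * (B powr (2 * s) / c)" if "k < B" for k
  proof -
    obtain m where m: "B = Suc m" using B by (cases B) auto
    have "c < B powr (2 * s) * lam m" using decay[of m] B m by simp
    then have last: "1 / lam m \<le> B powr (2 * s) / c"
      using c lam_pos[of m] by (simp add: field_simps)
    have "lam m \<le> lam k" using that m by (intro decseqD[OF lam_dec]) simp
    then have "1 / lam k \<le> 1 / lam m" using lam_pos by (intro divide_left_mono) auto
    with last have "1 / lam k \<le> B powr (2 * s) / c" by linarith
    then have "a^2 * (1 / lam k) \<le> a^2 * (B powr (2 * s) / c)" by (rule mult_left_mono) simp
    then show ?thesis by simp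
  qed
  then have "(\<Sum>k<B. a^2 / lam k) \<le> (\<Sum>k<B. a^2 * (B powr (2 * s) / c))" by (intro sum_mono) auto
  then show ?thesis by (simp add: mult_ac)
qed

lemma design_rate_identity:
  fixes s \<theta> D n r :: real
  assumes s: "0 < s" and \<theta>: "0 \<le> \<theta>" and D: "0 < D" and n: "0 < n"
  defines "r \<equiv> 4 * s / (4 * s + \<theta> + 1)"
  shows "(D * n powr (-r)) powr (\<theta> + 1) * (n * (D * n powr (-r))) powr (4 * s) = D powr (4 * s + \<theta> + 1)"
proof -
  have "0 < 4 * s + \<theta> + 1" using s \<theta> by simp
  then have re: "r * (4 * s + \<theta> + 1) = 4 * s" by (simp add: r_def)
  have d: "(D * n powr (-r)) powr (\<theta> + 1) = D powr (\<theta> + 1) * n powr (-r * (\<theta> + 1))"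
    using D n by (simp add: powr_mult powr_powr)
  have x: "(n * (D * n powr (-r))) powr (4 * s) = D powr (4 * s) * (n powr (4 * s) * n powr (-r * (4 * s)))"
    using D n by (simp add: powr_mult powr_powr mult_ac)
  have "n powr (-r * (\<theta> + 1)) * (n powr (4 * s) * n powr (-r * (4 * s)))
      = n powr (-r * (\<theta> + 1) + (4 * s + -r * (4 * s)))"
    by (simp only: powr_add)
  also have "-r * (\<theta> + 1) + (4 * s + -r * (4 * s)) = 0"
    using re by (simp add: algebra_simps)
  finally have nn: "n powr (-r * (\<theta> + 1)) * (n powr (4 * s) * n powr (-r * (4 * s))) = 1"
    using n by simp
  have DD: "D powr (\<theta> + 1) * D powr (4 * s) = D powr (4 * s + \<theta> + 1)"
    by (simp only: powr_add[symmetric] add_ac)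
  have "(D * n powr (-r)) powr (\<theta> + 1) * (n * (D * n powr (-r))) powr (4 * s)
      = (D powr (\<theta> + 1) * D powr (4 * s)) * (n powr (-r * (\<theta> + 1)) * (n powr (4 * s) * n powr (-r * (4 * s))))"
    unfolding d x by (simp only: mult_ac)
  then show ?thesis by (simp only: nn DD mult_1_right)
qed

lemma nat_ceiling_design:
  fixes \<kappa> x d c Mt C s \<theta> :: real and k0 :: nat
  assumes \<kappa>: "0 < \<kappa>" and c: "0 < c" and s: "0 < s" and d: "0 < d"
    and x: "max (1 / \<kappa>) (real k0 + 1) \<le> x"
    and small: "2 * \<kappa> * C^2 * (d * x^2) \<le> 1/4"
    and cls: "d powr \<theta> * d * (2 * \<kappa> * x^2) powr (2 * s) \<le> c * Mt"
  defines "B \<equiv> nat \<lceil>\<kappa> * x^2\<rceil>"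
  shows "k0 < B" "d * B * C^2 \<le> 1/4" "x \<le> B" "\<kappa> * x^2 \<le> B"
    "d powr \<theta> * (d * B powr (2 * s) / c) \<le> Mt"
proof -
  have xk: "real k0 + 1 \<le> x" using x by simp
  have kx: "1 \<le> \<kappa> * x" using x \<kappa> by (simp add: field_simps)
  have kxx: "x \<le> \<kappa> * x^2"
    using mult_left_mono[OF kx, of x] xk by (simp add: power2_eq_square mult_ac)
  have B1: "\<kappa> * x^2 \<le> B" unfolding B_def by linarith
  have "real B < \<kappa> * x^2 + 1" unfolding B_def using kxx xk by linarith
  then have B: "\<kappa> * x^2 \<le> B" "B \<le> 2 * \<kappa> * x^2" using B1 kxx xk by linarith+
  show "x \<le> B" "\<kappa> * x^2 \<le> B" using B kxx by linarith+
  have "real k0 < B" using xk B kxx by linarith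
  then show "k0 < B" by simp
  have "d * B * C^2 \<le> d * (2 * \<kappa> * x^2) * C^2"
    using d B by (intro mult_right_mono mult_left_mono) auto
  then show "d * B * C^2 \<le> 1/4" using small by (simp add: mult_ac)
  have "real B powr (2 * s) \<le> (2 * \<kappa> * x^2) powr (2 * s)"
    using B s by (intro powr_mono2) auto
  then have "d powr \<theta> * (d * B powr (2 * s) / c) \<le> d powr \<theta> * d * (2 * \<kappa> * x^2) powr (2 * s) / c"
    using d c by (simp add: divide_right_mono mult_left_mono mult.assoc)
  also have "\<dots> \<le> Mt" using cls c by (simp add: divide_le_eq mult.commute)
  finally show "d powr \<theta> * (d * B powr (2 * s) / c) \<le> Mt" .
qed

lemma design_exponents:
  fixes D r n :: real
  assumes n: "0 < n"
  shows "n * (D * n powr (-r)) = D * n powr (1 - r)"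
    and "D * n powr (-r) * (D * n powr (1 - r))^2 = D^3 * n powr (2 - 3 * r)"
proof -
  have "n * (D * n powr (-r)) = D * (n powr 1 * n powr (-r))" using n by simp
  also have "n powr 1 * n powr (-r) = n powr (1 + -r)" by (simp only: powr_add)
  finally show "n * (D * n powr (-r)) = D * n powr (1 - r)" by simp
  have "D * n powr (-r) * (D * n powr (1 - r))^2 = D^3 * (n powr (-r) * n powr (1 - r) * n powr (1 - r))"
    by (simp add: power2_eq_square power3_eq_cube mult_ac)
  also have "n powr (-r) * n powr (1 - r) * n powr (1 - r) = n powr (-r + (1 - r) + (1 - r))"
    by (simp only: powr_add)
  also have "-r + (1 - r) + (1 - r) = 2 - 3 * r" by simp
  finally show "D * n powr (-r) * (D * n powr (1 - r))^2 = D^3 * n powr (2 - 3 * r)" .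
qed

lemma eventually_design_size:
  fixes r D X0 \<epsilon> :: real
  assumes r1: "r < 1" and r2: "2 < 3 * r" and D: "0 < D" and X0: "0 < X0" and \<epsilon>: "0 < \<epsilon>"
  shows "\<forall>\<^sub>F n in sequentially. X0 \<le> real n * (D * real n powr (-r)) \<and>
           D * real n powr (-r) * (real n * (D * real n powr (-r)))^2 \<le> \<epsilon>"
proof -
  have "\<forall>\<^sub>F n in sequentially. real n powr (r - 1) < D / X0"
    using r1 D X0 by (intro eventually_real_powr_less) auto
  moreover have "\<forall>\<^sub>F n in sequentially. real n powr (2 - 3 * r) < \<epsilon> / D^3"
    using r2 D \<epsilon> by (intro eventually_real_powr_less) auto
  ultimately show ?thesis using eventually_gt_at_top[of 0]
  proof eventually_elim
    case (elim n)
    then have n: "0 < real n" by simp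
    have "real n powr (1 - r) * real n powr (r - 1) = real n powr ((1 - r) + (r - 1))"
      by (simp only: powr_add)
    then have w: "D * real n powr (1 - r) * real n powr (r - 1) = D" using n by simp
    have "X0 * real n powr (r - 1) < D" using elim(1) X0 by (simp add: pos_less_divide_eq mult.commute)
    also have "D = D * real n powr (1 - r) * real n powr (r - 1)" using w by simp
    finally have "X0 < D * real n powr (1 - r)" using n by simp
    moreover have "D^3 * real n powr (2 - 3 * r) < \<epsilon>"
      using elim(2) D by (simp add: pos_less_divide_eq mult.commute)
    ultimately show ?case unfolding design_exponents[OF n] by auto
  qed
qed

text \<open>\<open>\<kappa>\<close> is chosen so that \<open>(2\<kappa>) powr (2s) * D powr (4s + \<theta> + 1) = c Mt\<close>.\<close>

lemma design_class_identity:
  fixes s \<theta> D c Mt n r d \<kappa> :: real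
  assumes s: "0 < s" and \<theta>: "0 \<le> \<theta>" and D: "0 < D" and c: "0 < c" and Mt: "0 < Mt" and n: "0 < n"
  defines "r \<equiv> 4 * s / (4 * s + \<theta> + 1)" and "d \<equiv> D * n powr (-r)"
    and "\<kappa> \<equiv> (c * Mt / D powr (4 * s + \<theta> + 1)) powr (1 / (2 * s)) / 2"
  shows "d powr \<theta> * d * (2 * \<kappa> * (n * d)^2) powr (2 * s) = c * Mt"
proof -
  define K where "K = c * Mt / D powr (4 * s + \<theta> + 1)"
  have K: "0 < K" using c Mt D by (simp add: K_def)
  have \<kappa>2: "(2 * \<kappa>) powr (2 * s) = K"
  proof -
    have "2 * \<kappa> = K powr (1 / (2 * s))" by (simp add: \<kappa>_def K_def)
    then have "(2 * \<kappa>) powr (2 * s) = K powr (1 / (2 * s) * (2 * s))" by (simp only: powr_powr)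
    also have "1 / (2 * s) * (2 * s) = 1" using s by simp
    finally show ?thesis using K by simp
  qed
  define x where "x = n * d"
  have d0: "0 < d" using D n by (simp add: d_def)
  have x0: "0 < x" using d0 n by (simp add: x_def)
  have \<kappa>0: "0 < \<kappa>" using c Mt D by (simp add: \<kappa>_def)
  have Bq: "(2 * \<kappa> * x^2) powr (2 * s) = (2 * \<kappa>) powr (2 * s) * x powr (4 * s)"
  proof -
    have "(2 * \<kappa> * x^2) powr (2 * s) = (2 * \<kappa>) powr (2 * s) * (x^2) powr (2 * s)"
      using \<kappa>0 x0 by (simp add: powr_mult)
    also have "(x^2) powr (2 * s) = x powr (2 * (2 * s))"
    proof -
      have "x^2 = x powr 2" using x0 by (simp add: powr_numeral)
      then show ?thesis by (simp only: powr_powr)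
    qed
    finally show ?thesis by simp
  qed
  have dd: "d powr \<theta> * d = d powr (\<theta> + 1)" using d0 by (simp add: powr_add)
  have rate: "d powr (\<theta> + 1) * x powr (4 * s) = D powr (4 * s + \<theta> + 1)"
    unfolding x_def d_def r_def by (rule design_rate_identity[OF s \<theta> D n])
  have "d powr \<theta> * d * (2 * \<kappa> * x^2) powr (2 * s)
      = d powr (\<theta> + 1) * ((2 * \<kappa>) powr (2 * s) * x powr (4 * s))"
    by (simp only: dd Bq)
  also have "\<dots> = K * (d powr (\<theta> + 1) * x powr (4 * s))" by (simp only: \<kappa>2) (simp only: mult_ac)
  also have "\<dots> = c * Mt" using D by (simp add: rate K_def)
  finally show ?thesis unfolding x_def .
qed

lemma eventually_design_budget:
  fixes s \<theta> D c Mt C r \<kappa> :: real and k_min :: nat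
  assumes s: "1/2 < s" and \<theta>0: "0 \<le> \<theta>" and \<theta>1: "\<theta> < 2 * s - 1" and D: "0 < D"
    and c: "0 < c" and Mt: "0 < Mt"
  defines "r \<equiv> 4 * s / (4 * s + \<theta> + 1)"
    and "\<kappa> \<equiv> (c * Mt / D powr (4 * s + \<theta> + 1)) powr (1 / (2 * s)) / 2"
  shows "\<forall>\<^sub>F n in sequentially. \<exists>d (B::nat). d = D * real n powr (-r) \<and> 0 < d \<and> k_min < B \<and>
           d * real B * C^2 \<le> 1/4 \<and> real n * d \<le> real B \<and> \<kappa> * (real n * d)^2 \<le> real B \<and>
           d powr \<theta> * (d * real B powr (2 * s) / c) \<le> Mt"
proof -
  have s0: "0 < s" using s by simp
  have e0: "0 < 4 * s + \<theta> + 1" using s \<theta>0 by simp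
  have r1: "r < 1" using e0 \<theta>0 by (simp add: r_def field_simps)
  have r2: "2 < 3 * r" using \<theta>1 e0 by (simp add: r_def field_simps)
  have \<kappa>0: "0 < \<kappa>" using c Mt D by (simp add: \<kappa>_def)
  define Cs where "Cs = max 1 (C^2)"
  have Cs: "0 < Cs" by (simp add: Cs_def)
  have "\<forall>\<^sub>F n in sequentially. max (1 / \<kappa>) (real k_min + 1) \<le> real n * (D * real n powr (-r)) \<and>
           D * real n powr (-r) * (real n * (D * real n powr (-r)))^2 \<le> 1 / (8 * \<kappa> * Cs)"
    using r1 r2 D \<kappa>0 Cs by (intro eventually_design_size) auto
  then show ?thesis using eventually_gt_at_top[of 0]
  proof eventually_elim
    case (elim n)
    define d where "d = D * real n powr (-r)"
    have n0: "0 < real n" using elim by simp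
    have d0: "0 < d" using D n0 by (simp add: d_def)
    have x: "max (1 / \<kappa>) (real k_min + 1) \<le> real n * d" using elim by (simp add: d_def)
    have "2 * \<kappa> * C^2 * (d * (real n * d)^2) \<le> 2 * \<kappa> * Cs * (d * (real n * d)^2)"
      using \<kappa>0 d0 by (intro mult_right_mono mult_left_mono) (auto simp: Cs_def)
    also have "\<dots> \<le> 2 * \<kappa> * Cs * (1 / (8 * \<kappa> * Cs))"
      using elim \<kappa>0 Cs by (intro mult_left_mono) (auto simp: d_def)
    also have "\<dots> = 1/4" using \<kappa>0 Cs by (simp add: field_simps)
    finally have small: "2 * \<kappa> * C^2 * (d * (real n * d)^2) \<le> 1/4" .
    have "d powr \<theta> * d * (2 * \<kappa> * (real n * d)^2) powr (2 * s) = c * Mt"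
      unfolding d_def r_def \<kappa>_def by (rule design_class_identity[OF s0 \<theta>0 D c Mt n0])
    then have cls: "d powr \<theta> * d * (2 * \<kappa> * (real n * d)^2) powr (2 * s) \<le> c * Mt" by simp
    note B = nat_ceiling_design[OF \<kappa>0 c s0 d0 x small cls]
    show ?case using d0 B by (intro exI[of _ d] exI[of _ "nat \<lceil>\<kappa> * (real n * d)^2\<rceil>"]) (simp add: d_def)
  qed
qed

lemma sign_amplitude:
  fixes d C \<kappa> a :: real and n B :: nat
  assumes d: "0 < d" and B: "0 < B" and small: "d * B * C^2 \<le> 1/4" and nd: "n * d \<le> B"
    and \<kappa>: "0 < \<kappa>" and \<kappa>B: "\<kappa> * (n * d)^2 \<le> B"
  defines "a \<equiv> sqrt (d / B)"
  shows "0 \<le> a" "a^2 * B = d" "a * B * C \<le> 1/2" "n * a^2 \<le> 1" "B * (n * a^2)^2 \<le> 1 / \<kappa>"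
proof -
  have a2: "a^2 = d / B" using d B by (simp add: a_def)
  show "0 \<le> a" using d B by (simp add: a_def)
  show a2B: "a^2 * B = d" using a2 B by simp
  have "(a * B * C)^2 = (a^2 * B) * B * C^2"
    by (simp only: power_mult_distrib power2_eq_square mult_ac)
  also have "\<dots> = d * B * C^2" by (simp only: a2B)
  also have "\<dots> \<le> (1/2)^2" using small by (simp add: power2_eq_square)
  finally have "(a * B * C)^2 \<le> (1/2)^2" .
  then show "a * B * C \<le> 1/2" by (rule power2_le_imp_le) simp
  have "n * a^2 = n * d / B" using a2 by simp
  also have "\<dots> \<le> 1" using nd B by (simp add: divide_le_eq)
  finally show "n * a^2 \<le> 1" .
  have "B * (n * a^2)^2 = B * (n * (d / B))^2" by (simp only: a2)
  also have "\<dots> = (n * d)^2 / B" using B by (simp add: power2_eq_square field_simps)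
  also have "\<dots> \<le> 1 / \<kappa>" using \<kappa>B \<kappa> B by (simp add: field_simps)
  finally show "B * (n * a^2)^2 \<le> 1 / \<kappa>" .
qed

lemma ereal_liminf_pos_imp_eventually:
  fixes f :: "nat \<Rightarrow> real"
  assumes "0 < liminf (\<lambda>k. ereal (f k))"
  obtains c where "0 < c" "\<forall>\<^sub>F k in sequentially. c < f k"
proof -
  obtain c where c: "0 < ereal c" "ereal c < liminf (\<lambda>k. ereal (f k))"
    using ereal_dense2[OF assms] by blast
  from less_LiminfD[OF c(2)] have "\<forall>\<^sub>F k in sequentially. c < f k" by simp
  with c(1) show ?thesis using that by simp
qed

lemma ereal_limsup_finite_imp_eventually:
  fixes f :: "nat \<Rightarrow> real"
  assumes "limsup (\<lambda>n. ereal (f n)) < \<infinity>"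
  obtains D where "0 < D" "\<forall>\<^sub>F n in sequentially. f n < D"
proof -
  obtain D0 where "limsup (\<lambda>n. ereal (f n)) < ereal D0"
    using ereal_dense2[OF assms] by blast
  from Limsup_lessD[OF this] have "\<forall>\<^sub>F n in sequentially. f n < max D0 1"
    by eventually_elim auto
  then show ?thesis using that[of "max D0 1"] by simp
qed

lemma (in bounded_eigenbasis) eventually_minimax_risk_ge:
  fixes lam \<Delta> :: "nat \<Rightarrow> real" and s \<theta> M c D :: real
  assumes lam_pos: "\<And>k. 0 < lam k" and lam_dec: "decseq lam"
    and c: "0 < c" and decay: "\<forall>\<^sub>F k in sequentially. c < real (Suc k) powr (2 * s) * lam k"
    and s: "1/2 < s" and \<theta>0: "0 \<le> \<theta>" and \<theta>1: "\<theta> < 2 * s - 1" and M: "0 < M"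
    and D: "0 < D" and rate: "\<forall>\<^sub>F n in sequentially. \<Delta> n * n powr (4 * s / (4 * s + \<theta> + 1)) < D"
  shows "\<exists>\<epsilon>>0. \<forall>\<^sub>F n in sequentially. ereal \<epsilon>
           \<le> (INF T\<in>tests P0 n. ereal (\<integral>\<omega>. T \<omega> \<partial>PiM {..<n} (\<lambda>_. P0)) + type2 P0 lam phi n T (\<Delta> n) \<theta> M)"
proof -
  obtain k0 where decay: "\<And>k. k0 \<le> k \<Longrightarrow> c < real (Suc k) powr (2 * s) * lam k"
    using decay by (auto simp: eventually_sequentially)
  define Mt where "Mt = (if \<theta> = 0 then M^2 else M powr (2 * \<theta>))"
  have Mt: "0 < Mt" using M by (simp add: Mt_def)
  define \<kappa> where "\<kappa> = (c * Mt / D powr (4 * s + \<theta> + 1)) powr (1 / (2 * s)) / 2"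
  have \<kappa>: "0 < \<kappa>" using c Mt D by (simp add: \<kappa>_def)
  have "\<forall>\<^sub>F n in sequentially. ereal (3 / (4 * (exp (1 / \<kappa>) + 1)))
      \<le> (INF T\<in>tests P0 n. ereal (\<integral>\<omega>. T \<omega> \<partial>PiM {..<n} (\<lambda>_. P0)) + type2 P0 lam phi n T (\<Delta> n) \<theta> M)"
    using eventually_design_budget[where k_min=k0 and C=C, OF s \<theta>0 \<theta>1 D c Mt, folded \<kappa>_def] rate eventually_gt_at_top[of 0]
  proof eventually_elim
    case (elim n)
    then obtain d :: real and B :: nat where d: "d = D * real n powr (- (4 * s / (4 * s + \<theta> + 1)))" "0 < d"
      and B: "k0 < B" and small: "d * B * C^2 \<le> 1/4" and nd: "real n * d \<le> B"
      and \<kappa>B: "\<kappa> * (real n * d)^2 \<le> B" and cls: "d powr \<theta> * (d * B powr (2 * s) / c) \<le> Mt"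
      by blast
    have B0: "0 < B" using B by simp
    define a where "a = sqrt (d / B)"
    note a = sign_amplitude[OF d(2) B0 small nd \<kappa> \<kappa>B, folded a_def]
    have "\<Delta> n < D / real n powr (4 * s / (4 * s + \<theta> + 1))"
      using elim(2,3) by (simp add: pos_less_divide_eq)
    also have "\<dots> = a^2 * B" by (simp add: a(2) d(1) powr_minus divide_inverse)
    finally have \<Delta>: "\<Delta> n \<le> a^2 * B" by simp
    have "(\<Sum>k<B. a^2 / lam k) \<le> d * B powr (2 * s) / c"
      using sum_le_of_decay[OF lam_pos lam_dec decay c B, of a] a(2) by simp
    then have "d powr \<theta> * (\<Sum>k<B. a^2 / lam k) \<le> d powr \<theta> * (d * B powr (2 * s) / c)"
      by (rule mult_left_mono) simp
    then have interp: "(a^2 * B) powr \<theta> * (\<Sum>k<B. a^2 / lam k) \<le> (if \<theta> = 0 then M^2 else M powr (2 * \<theta>))"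
      using cls a(2) by (simp add: Mt_def)
    have "exp (B * (n * a^2)^2) \<le> exp (1 / \<kappa>)" using a(5) by simp
    then have "ereal (3 / (4 * (exp (1 / \<kappa>) + 1))) \<le> ereal (3 / (4 * (exp (B * (n * a^2)^2) + 1)))"
      by (simp add: divide_left_mono add_pos_pos)
    also have "\<dots> \<le> (INF T\<in>tests P0 n. ereal (\<integral>\<omega>. T \<omega> \<partial>PiM {..<n} (\<lambda>_. P0)) + type2 P0 lam phi n T (\<Delta> n) \<theta> M)"
      using a(2) d(2) by (intro minimax_risk_ge[OF lam_pos a(1) a(3) a(4) _ \<Delta> M \<theta>0 interp]) simp
    finally show ?case .
  qed
  moreover have "0 < 3 / (4 * (exp (1 / \<kappa>) + 1))" by (simp add: add_pos_pos)
  ultimately show ?thesis by blast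
qed

theorem theorem4:
  fixes P0 :: "'a measure" and K :: "'a \<Rightarrow> 'a \<Rightarrow> real"
    and lam :: "nat \<Rightarrow> real" and phi :: "nat \<Rightarrow> 'a \<Rightarrow> real"
    and s \<theta> M :: real and \<Delta> :: "nat \<Rightarrow> real"
  assumes P0: "prob_space P0"
    and K_sym: "\<forall>x y. K x y = K y x"
    and K_meas: "(\<lambda>(x, y). K x y) \<in> borel_measurable (P0 \<Otimes>\<^sub>M P0)"
    and K_sq: "integrable (P0 \<Otimes>\<^sub>M P0) (\<lambda>(x, y). (K x y)^2)"
    and mercer: "AE z in P0 \<Otimes>\<^sub>M P0. (\<lambda>k. lam k * phi k (fst z) * phi k (snd z)) sums K (fst z) (snd z)"
    and lam_pos: "\<forall>k. 0 < lam k"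
    and lam_dec: "\<forall>k. lam (Suc k) < lam k"
    and phi_L2: "\<forall>k. L2 P0 (phi k)"
    and phi_mean: "\<forall>k. (\<integral>x. phi k x \<partial>P0) = 0"
    and phi_orth: "\<forall>j k. inner_L2 P0 (phi j) (phi k) = (if j = k then 1 else 0)"
    and phi_complete: "\<forall>f. L2 P0 f \<and> (\<integral>x. f x \<partial>P0) = 0 \<and> (\<forall>k. inner_L2 P0 f (phi k) = 0)
                         \<longrightarrow> (AE x in P0. f x = 0)"
    and phi_bdd: "\<exists>C. \<forall>k. AE x in P0. \<bar>phi k x\<bar> \<le> C"
    and s: "s > 1/2"
    and decay_lo: "0 < liminf (\<lambda>k. ereal (real (Suc k) powr (2 * s) * lam k))"
    and decay_hi: "limsup (\<lambda>k. ereal (real (Suc k) powr (2 * s) * lam k)) < \<infinity>"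
    and M: "M > 0"
    and \<theta>0: "0 \<le> \<theta>" and \<theta>1: "\<theta> < 2 * s - 1"
    and rate: "limsup (\<lambda>n. ereal (\<Delta> n * real n powr (4 * s / (4 * s + \<theta> + 1)))) < \<infinity>"
  shows "0 < liminf (\<lambda>n. INF T\<in>tests P0 n.
            ereal (\<integral>\<omega>. T \<omega> \<partial>(PiM {..<n} (\<lambda>_. P0))) + type2 P0 lam phi n T (\<Delta> n) \<theta> M)"
proof -
  obtain C0 where C0: "\<forall>k. AE x in P0. \<bar>phi k x\<bar> \<le> C0" using phi_bdd by blast
  interpret bounded_eigenbasis P0 phi "max C0 0"
  proof (intro bounded_eigenbasis.intro bounded_eigenbasis_axioms.intro P0)
    show "AE x in P0. \<bar>phi k x\<bar> \<le> max C0 0" for k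
      using C0[rule_format, of k] by eventually_elim simp
  qed (use phi_L2 phi_mean phi_orth in \<open>auto simp: L2_def\<close>)
  have lam_decseq: "decseq lam" using lam_dec by (intro decseq_SucI) (simp add: less_imp_le)
  obtain c where c: "0 < c" "\<forall>\<^sub>F k in sequentially. c < real (Suc k) powr (2 * s) * lam k"
    by (rule ereal_liminf_pos_imp_eventually[OF decay_lo])
  obtain D where D: "0 < D" "\<forall>\<^sub>F n in sequentially. \<Delta> n * real n powr (4 * s / (4 * s + \<theta> + 1)) < D"
    by (rule ereal_limsup_finite_imp_eventually[OF rate])
  obtain \<epsilon> where "0 < \<epsilon>" and ev: "\<forall>\<^sub>F n in sequentially. ereal \<epsilon> \<le> (INF T\<in>tests P0 n.
            ereal (\<integral>\<omega>. T \<omega> \<partial>(PiM {..<n} (\<lambda>_. P0))) + type2 P0 lam phi n T (\<Delta> n) \<theta> M)"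
    using eventually_minimax_risk_ge[OF lam_pos[rule_format] lam_decseq c s \<theta>0 \<theta>1 M D] by blast
  have "ereal \<epsilon> \<le> liminf (\<lambda>n. INF T\<in>tests P0 n.
            ereal (\<integral>\<omega>. T \<omega> \<partial>(PiM {..<n} (\<lambda>_. P0))) + type2 P0 lam phi n T (\<Delta> n) \<theta> M)"
    using ev by (rule Liminf_bounded)
  with \<open>0 < \<epsilon>\<close> show ?thesis by (meson ereal_less(2) less_le_trans)
qed

end
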